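(* Let $T_{init}$ be the number of nodes of the initial tree. The expected optimization time of SMO-GP-single and of SMO-GP-multi on MO-ORDER is $O(n\,T_{init}+n^2\log n)$.
   Context: Fix an integer $n\ge 1$; the terminal set is $T=\{x_1,\bar x_1,\dots,x_n,\bar x_n\}$ ($\bar x_i$ the complement of $x_i$). A syntax tree is either the empty tree or a rooted ordered binary tree whose inner nodes are all labelled by the binary function $J$ (join, exactly two ordered children) and whose leaves are labelled by elements of $T$. The complexity $C(X)$ is the number of nodes of $X$ (0 for the empty tree). The leaf list $l$ of $X$ is the sequence of leaf labels in inorder. ORDER: build a list $S$ by scanning $l$ front to rear and appending a literal only if neither it nor its complement is already in $S$; ORDER$(X)$ is the number of positive literals $x_i$ in $S$. MO-ORDER$(X)=(\mathrm{ORDER}(X),C(X))$, ORDER maximized, $C$ minimized. Mutation (HVL-Prime applied $k$ times): each application chooses uniformly at random one of three operations. Substitute: replace a uniformly random leaf by a uniformly random $u\in T$. Insert: choose a uniformly random node $v$ and uniformly random $u\in T$, replace $v$ by a $J$-node with children $u$ and $v$ in uniformly random order (inserting into the empty tree yields the single leaf $u$). Delete: choose a uniformly random leaf $v$ with parent $p$ and sibling $u$, replace $p$ by $u$ (deleting $p$ and $v$; deleting the only leaf of a one-leaf tree yields the empty tree). For single-operation mutation $k=1$; for multi-operation mutation $k=1+\mathrm{Pois}(1)$ with $\mathrm{Pois}(1)$ Poisson with mean 1. Dominance for MO-$F$: $Y\succeq X$ iff $F(Y)\ge F(X)$ and $C(Y)\le C(X)$; $Y\succ X$ iff $Y\succeq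 X$ and ($F(Y)>F(X)$ or $C(Y)<C(X)$). A tree is Pareto optimal if no tree dominates it; the Pareto front is the set of objective vectors of Pareto optimal trees. SMO-GP: choose an initial tree $X$ and set $P:=\{X\}$; repeat: choose $X\in P$ uniformly at random, let $Y$ be a mutated copy of $X$; if no $Z\in P$ satisfies $Z\succ Y$, set $P:=(P\setminus\{Z\in P: Y\succeq Z\})\cup\{Y\}$. SMO-GP-single uses single-operation, SMO-GP-multi multi-operation mutation. Expected optimization time: expected number of iterations until the population contains, for every objective vector in the Pareto front, a tree with that objective vector. *)

theory Defs
  imports "HOL-Probability.Probability"
begin

datatype lit = Pos nat | Neg nat

fun compl :: "lit \<Rightarrow> lit" where
  "compl (Pos i) = Neg i" | "compl (Neg i) = Pos i"

text \<open>Non-empty trees: leaves labelled by literals, inner nodes are J (join).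
  A syntax tree is an option: None is the empty tree.\<close>
datatype bt = Lf lit | J bt bt

type_synonym stree = "bt option"

definition lits :: "nat \<Rightarrow> lit set" where
  "lits n = Pos ` {1..n} \<union> Neg ` {1..n}"

fun size_bt :: "bt \<Rightarrow> nat" where
  "size_bt (Lf a) = 1" | "size_bt (J l r) = Suc (size_bt l + size_bt r)"

fun nleaves :: "bt \<Rightarrow> nat" where
  "nleaves (Lf a) = 1" | "nleaves (J l r) = nleaves l + nleaves r"

fun leaf_list :: "bt \<Rightarrow> lit list" where
  "leaf_list (Lf a) = [a]" | "leaf_list (J l r) = leaf_list l @ leaf_list r"

definition cplx :: "stree \<Rightarrow> nat" where
  "cplx X = (case X of None \<Rightarrow> 0 | Some t \<Rightarrow> size_bt t)"

definition leaves :: "stree \<Rightarrow> lit list" where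
  "leaves X = (case X of None \<Rightarrow> [] | Some t \<Rightarrow> leaf_list t)"

definition valid :: "nat \<Rightarrow> stree \<Rightarrow> bool" where
  "valid n X \<longleftrightarrow> set (leaves X) \<subseteq> lits n"

definition order_step :: "lit list \<Rightarrow> lit \<Rightarrow> lit list" where
  "order_step S x = (if x \<in> set S \<or> compl x \<in> set S then S else S @ [x])"

definition order_S :: "lit list \<Rightarrow> lit list" where
  "order_S l = foldl order_step [] l"

definition ORDER :: "stree \<Rightarrow> nat" where
  "ORDER X = length (filter (\<lambda>x. \<exists>i. x = Pos i) (order_S (leaves X)))"

definition wdom :: "stree \<Rightarrow> stree \<Rightarrow> bool" where
  "wdom Y X \<longleftrightarrow> ORDER Y \<ge> ORDER X \<and> cplx Y \<le> cplx X"

definition sdom :: "stree \<Rightarrow> stree \<Rightarrow> bool" where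
  "sdom Y X \<longleftrightarrow> wdom Y X \<and> (ORDER Y > ORDER X \<or> cplx Y < cplx X)"

definition pareto_optimal :: "nat \<Rightarrow> stree \<Rightarrow> bool" where
  "pareto_optimal n X \<longleftrightarrow> valid n X \<and> \<not> (\<exists>Y. valid n Y \<and> sdom Y X)"

definition pareto_front :: "nat \<Rightarrow> (nat \<times> nat) set" where
  "pareto_front n = {(ORDER X, cplx X) | X. pareto_optimal n X}"

text \<open>Replace the i-th leaf (inorder, 0-based) by literal u.\<close>
fun subst_leaf :: "nat \<Rightarrow> lit \<Rightarrow> bt \<Rightarrow> bt" where
  "subst_leaf i u (Lf a) = Lf u"
| "subst_leaf i u (J l r) =
     (if i < nleaves l then J (subst_leaf i u l) r
      else J l (subst_leaf (i - nleaves l) u r))"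

text \<open>Replace the i-th node (preorder, 0-based) v by f v.\<close>
fun ins_at :: "(bt \<Rightarrow> bt) \<Rightarrow> nat \<Rightarrow> bt \<Rightarrow> bt" where
  "ins_at f i (Lf a) = f (Lf a)"
| "ins_at f i (J l r) =
     (if i = 0 then f (J l r)
      else if i \<le> size_bt l then J (ins_at f (i - 1) l) r
      else J l (ins_at f (i - 1 - size_bt l) r))"

fun del_leaf :: "nat \<Rightarrow> bt \<Rightarrow> stree" where
  "del_leaf i (Lf a) = None"
| "del_leaf i (J l r) =
     (if i < nleaves l then
        (case del_leaf i l of None \<Rightarrow> Some r | Some l' \<Rightarrow> Some (J l' r))
      else
        (case del_leaf (i - nleaves l) r of None \<Rightarrow> Some l | Some r' \<Rightarrow> Some (J l r')))"

definition substitute :: "nat \<Rightarrow> stree \<Rightarrow> stree pmf" where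
  "substitute n X = (case X of
      None \<Rightarrow> return_pmf None
    | Some t \<Rightarrow> do { i \<leftarrow> pmf_of_set {..<nleaves t}; u \<leftarrow> pmf_of_set (lits n);
                     return_pmf (Some (subst_leaf i u t)) })"

definition insert_op :: "nat \<Rightarrow> stree \<Rightarrow> stree pmf" where
  "insert_op n X = (case X of
      None \<Rightarrow> do { u \<leftarrow> pmf_of_set (lits n); return_pmf (Some (Lf u)) }
    | Some t \<Rightarrow> do { i \<leftarrow> pmf_of_set {..<size_bt t}; u \<leftarrow> pmf_of_set (lits n);
                     b \<leftarrow> bernoulli_pmf (1/2);
                     return_pmf (Some (ins_at (\<lambda>v. if b then J (Lf u) v else J v (Lf u)) i t)) })"

definition delete_op :: "stree \<Rightarrow> stree pmf" where
  "delete_op X = (case X of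
      None \<Rightarrow> return_pmf None
    | Some t \<Rightarrow> do { i \<leftarrow> pmf_of_set {..<nleaves t}; return_pmf (del_leaf i t) })"

definition hvl_prime :: "nat \<Rightarrow> stree \<Rightarrow> stree pmf" where
  "hvl_prime n X = do { op \<leftarrow> pmf_of_set {0::nat, 1, 2};
      (if op = 0 then substitute n X else if op = 1 then insert_op n X else delete_op X) }"

definition hvl_iter :: "nat \<Rightarrow> nat \<Rightarrow> stree \<Rightarrow> stree pmf" where
  "hvl_iter n k X = ((\<lambda>D. bind_pmf D (hvl_prime n)) ^^ k) (return_pmf X)"

definition mutate_single :: "nat \<Rightarrow> stree \<Rightarrow> stree pmf" where
  "mutate_single n X = hvl_prime n X"

definition mutate_multi :: "nat \<Rightarrow> stree \<Rightarrow> stree pmf" where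
  "mutate_multi n X = do { k \<leftarrow> poisson_pmf 1; hvl_iter n (Suc k) X }"

definition smo_step :: "(nat \<Rightarrow> stree \<Rightarrow> stree pmf) \<Rightarrow> nat \<Rightarrow> stree set \<Rightarrow> stree set pmf" where
  "smo_step mut n P = do { X \<leftarrow> pmf_of_set P; Y \<leftarrow> mut n X;
      return_pmf (if \<exists>Z\<in>P. sdom Z Y then P else {Z \<in> P. \<not> wdom Y Z} \<union> {Y}) }"

definition covers_front :: "nat \<Rightarrow> stree set \<Rightarrow> bool" where
  "covers_front n P \<longleftrightarrow> (\<forall>v \<in> pareto_front n. \<exists>X \<in> P. (ORDER X, cplx X) = v)"

text \<open>Chain stopped at the first time the front is covered: state None means
  "the front has already been covered at some earlier time".\<close>
definition stopped_step :: "(nat \<Rightarrow> stree \<Rightarrow> stree pmf) \<Rightarrow> nat \<Rightarrow> stree set option \<Rightarrow> stree set option pmf" where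
  "stopped_step mut n s = (case s of
      None \<Rightarrow> return_pmf None
    | Some P \<Rightarrow> (if covers_front n P then return_pmf None else map_pmf Some (smo_step mut n P)))"

definition stopped_dist :: "(nat \<Rightarrow> stree \<Rightarrow> stree pmf) \<Rightarrow> nat \<Rightarrow> stree \<Rightarrow> nat \<Rightarrow> stree set option pmf" where
  "stopped_dist mut n X0 t = ((\<lambda>D. bind_pmf D (stopped_step mut n)) ^^ t) (return_pmf (Some {X0}))"

text \<open>Pr[T > t]: after t iterations the front has not been covered at any time \<le> t.\<close>
definition prob_not_done :: "(nat \<Rightarrow> stree \<Rightarrow> stree pmf) \<Rightarrow> nat \<Rightarrow> stree \<Rightarrow> nat \<Rightarrow> real" where
  "prob_not_done mut n X0 t =
     measure_pmf.prob (stopped_dist mut n X0 t) {Some P | P. \<not> covers_front n P}"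

text \<open>Expected optimization time E[T] = sum over t \<ge> 0 of Pr[T > t] (possibly infinite).\<close>
definition expected_opt_time :: "(nat \<Rightarrow> stree \<Rightarrow> stree pmf) \<Rightarrow> nat \<Rightarrow> stree \<Rightarrow> ennreal" where
  "expected_opt_time mut n X0 = (\<Sum>t. ennreal (prob_not_done mut n X0 t))"

end

theory Submission
  imports Defs "HOL-Library.Multiset"
begin

(*
  Every tree satisfies C(X) = 2|leaves X| - 1 >= 2 ORDER(X) - 1, and the
  comb of the leaves x_1,...,x_k attains equality; hence the Pareto front is
  {(j, 2j-1) | j <= n}.  A tree with objective vector (k, 2k-1) has exactly the leaves of
  k distinct positive variables, so inserting one of the n-k missing positive literals
  yields the vector (k+1, 2k+1).  The population is an antichain, so it has at most n+1
  members and keeps every Pareto vector once found.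

  A general drift lemma: if a nonnegative potential V of a Markov chain
  drops in expectation by at least 1 in every step taken from a "bad" state, then the sum
  over t of Pr[state at time t is bad] is at most V(start).  We apply it to the stopped
  SMO-GP chain with a two-phase potential: while the empty tree is missing, the minimal
  complexity decreases with probability >= 1/(9(n+1)) (delete a leaf of a smallest tree);
  afterwards, the largest level k with all vectors (j, 2j-1), j <= k, present rises with
  probability >= (n-k)/(18 n (n+1)).  Both mutation operators satisfy the two facts used
  about mutation (validity is preserved, and every HVL-Prime outcome keeps at least 1/3
  of its probability), so one bound covers both; a harmonic sum finishes the estimate.
*)

fun var :: "lit \<Rightarrow> nat" where "var (Pos i) = i" | "var (Neg i) = i"
fun isPos :: "lit \<Rightarrow> bool" where "isPos (Pos i) = True" | "isPos (Neg i) = False"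

lemma isPos_iff: "isPos x \<longleftrightarrow> (\<exists>i. x = Pos i)"
  by (cases x) auto

lemma var_eq: "var y = var x \<Longrightarrow> y = x \<or> y = compl x"
  by (cases x; cases y) auto

lemma len_leaf_list: "length (leaf_list t) = nleaves t"
  by (induction t) auto

lemma nleaves_pos: "nleaves t \<ge> 1"
  by (induction t) auto

lemma size_bt_eq: "size_bt t = 2 * nleaves t - 1"
proof (induction t)
  case (J l r)
  have "nleaves l \<ge> 1" "nleaves r \<ge> 1" by (rule nleaves_pos)+
  with J show ?case by simp
qed simp

lemma cplx_leaves: "cplx X = 2 * length (leaves X) - 1"
  by (cases X) (auto simp: cplx_def leaves_def size_bt_eq len_leaf_list)

lemma cplx0:
  assumes "cplx X = 0" shows "X = None"
proof (cases X)
  case (Some t) then show ?thesis using assms nleaves_pos[of t] by (simp add: cplx_def size_bt_eq)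
qed simp

lemma ORDER_None [simp]: "ORDER None = 0"
  by (simp add: ORDER_def leaves_def order_S_def)

lemma cplx_None [simp]: "cplx None = 0"
  by (simp add: cplx_def)

lemma lits_finite [simp]: "finite (lits n)"
  by (simp add: lits_def)

lemma lits_ne: "n \<ge> 1 \<Longrightarrow> lits n \<noteq> {}"
  by (auto simp: lits_def)

lemma lits_card: "card (lits n) = 2 * n"
proof -
  have "card (lits n) = card (Pos ` {1..n}) + card (Neg ` {1..n})"
    unfolding lits_def by (rule card_Un_disjoint) auto
  also have "\<dots> = 2 * n" by (simp add: card_image inj_on_def)
  finally show ?thesis .
qed

lemma order_S_snoc: "order_S (xs @ [x]) = order_step (order_S xs) x"
  by (simp add: order_S_def)

lemma order_S_len: "length (order_S l) \<le> length l"
  by (induction l rule: rev_induct) (auto simp: order_S_snoc order_step_def order_S_def)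

lemma order_S_set: "set (order_S l) \<subseteq> set l"
  by (induction l rule: rev_induct) (auto simp: order_S_snoc order_step_def order_S_def)

lemma order_S_distinct: "distinct (map var (order_S l))"
  by (induction l rule: rev_induct)
     (auto simp: order_S_snoc order_step_def order_S_def dest: var_eq[OF sym])

lemma order_S_full: "length (order_S l) = length l \<Longrightarrow> order_S l = l"
proof (induction l rule: rev_induct)
  case Nil then show ?case by (simp add: order_S_def)
next
  case (snoc x xs)
  have "length (order_S xs) \<le> length xs" by (rule order_S_len)
  with snoc show ?case
    by (auto simp: order_S_snoc order_step_def split: if_splits)
qed

lemma order_S_pos: "\<forall>x\<in>set l. isPos x \<Longrightarrow> distinct (map var l) \<Longrightarrow> order_S l = l"
proof (induction l rule: rev_induct)
  case Nil then show ?case by (simp add: order_S_def)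
next
  case (snoc x xs)
  then have IH: "order_S xs = xs" by auto
  from snoc.prems have "x \<notin> set xs" "compl x \<notin> set xs"
    by (cases x; force)+
  then show ?case by (simp add: order_S_snoc order_step_def IH)
qed

lemma ORDER_isPos: "ORDER X = length (filter isPos (order_S (leaves X)))"
  unfolding ORDER_def by (metis isPos_iff)

lemma ORDER_le_len: "ORDER X \<le> length (leaves X)"
  unfolding ORDER_isPos using order_S_len[of "leaves X"]
  by (meson dual_order.trans length_filter_le)

lemma cplx_ge_ORDER: "cplx X \<ge> 2 * ORDER X - 1"
  using ORDER_le_len[of X] cplx_leaves[of X] by linarith

lemma ORDER_le_n:
  assumes "valid n X" shows "ORDER X \<le> n"
proof -
  let ?F = "filter isPos (order_S (leaves X))"
  have d: "distinct (map var ?F)"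
    using order_S_distinct[of "leaves X"] by (simp add: distinct_map_filter)
  have "set (map var ?F) \<subseteq> {1..n}"
    using order_S_set[of "leaves X"] assms by (auto simp: valid_def lits_def)
  then have "card (set (map var ?F)) \<le> n"
    by (metis card_atLeastAtMost card_mono diff_Suc_1 finite_atLeastAtMost)
  with d have "length ?F \<le> n" by (metis distinct_card length_map)
  then show ?thesis by (simp add: ORDER_isPos)
qed

lemma optimal_tree_leaves:
  assumes "ORDER (Some t) = k" "cplx (Some t) = 2 * k - 1"
  shows "length (leaf_list t) = k \<and> (\<forall>x\<in>set (leaf_list t). isPos x)
         \<and> distinct (map var (leaf_list t))"
proof -
  let ?l = "leaf_list t"
  let ?F = "filter isPos (order_S ?l)"
  have "k \<ge> 1" using assms nleaves_pos[of t] by (cases k) (auto simp: cplx_def size_bt_eq)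
  then have len: "length ?l = k" using assms(2) by (simp add: cplx_def size_bt_eq len_leaf_list)
  have F: "length ?F = k" using assms(1) by (simp add: ORDER_isPos leaves_def)
  have "length ?F \<le> length (order_S ?l)" "length (order_S ?l) \<le> length ?l"
    by (simp, rule order_S_len)
  then have full: "length (order_S ?l) = length ?l" and all: "length ?F = length (order_S ?l)"
    using len F by simp_all
  have os: "order_S ?l = ?l" by (rule order_S_full[OF full])
  have "\<forall>x\<in>set (order_S ?l). isPos x"
    using all by (metis filter_True length_filter_less less_irrefl)
  then show ?thesis using len os order_S_distinct[of ?l] by simp
qed

section \<open>The Pareto front\<close>

fun comb :: "lit list \<Rightarrow> bt" where
  "comb [] = Lf (Pos 0)" | "comb [x] = Lf x" | "comb (x # y # xs) = J (Lf x) (comb (y # xs))"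

lemma comb_leaves: "xs \<noteq> [] \<Longrightarrow> leaf_list (comb xs) = xs"
  by (induction xs rule: comb.induct) auto

definition witness :: "nat \<Rightarrow> stree" where
  "witness k = (if k = 0 then None else Some (comb (map Pos [1..<Suc k])))"

lemma witness_props:
  assumes "k \<le> n"
  shows "valid n (witness k) \<and> ORDER (witness k) = k \<and> cplx (witness k) = 2 * k - 1"
proof (cases "k = 0")
  case True then show ?thesis by (simp add: witness_def valid_def leaves_def)
next
  case False
  then have lv: "leaves (witness k) = map Pos [1..<Suc k]"
    by (simp add: witness_def leaves_def comb_leaves)
  have os: "order_S (map Pos [1..<Suc k]) = map Pos [1..<Suc k]"
    by (rule order_S_pos) (auto simp: distinct_map inj_on_def)
  have "ORDER (witness k) = k" unfolding ORDER_def lv os by (simp add: filter_map o_def)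
  moreover have "valid n (witness k)" using assms by (auto simp: valid_def lv lits_def)
  moreover have "cplx (witness k) = 2 * k - 1" by (simp add: cplx_leaves lv)
  ultimately show ?thesis by simp
qed

lemma pareto_char:
  assumes "pareto_optimal n X"
  shows "ORDER X \<le> n \<and> cplx X = 2 * ORDER X - 1"
proof -
  have le: "ORDER X \<le> n" using assms ORDER_le_n by (simp add: pareto_optimal_def)
  note W = witness_props[OF le]
  have "\<not> sdom (witness (ORDER X)) X" using assms W by (auto simp: pareto_optimal_def)
  then have "\<not> cplx (witness (ORDER X)) < cplx X" using W by (auto simp: sdom_def wdom_def)
  with W cplx_ge_ORDER[of X] le show ?thesis by simp
qed

lemma wdom_optimal_vector:
  assumes "wdom Y Z" "ORDER Z = j" "cplx Z = 2 * j - 1"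
  shows "ORDER Y = j \<and> cplx Y = 2 * j - 1"
proof (cases "j = 0")
  case True
  with assms have "Y = None" by (simp add: wdom_def cplx0)
  with True show ?thesis by simp
next
  case False
  with assms cplx_ge_ORDER[of Y] show ?thesis unfolding wdom_def by linarith
qed

lemma ins_at_props:
  assumes "\<And>v. mset (leaf_list (f v)) = mset (leaf_list v) + {#u#}"
      and "\<And>v. size_bt (f v) = size_bt v + 2"
  shows "mset (leaf_list (ins_at f i t)) = mset (leaf_list t) + {#u#} \<and>
         size_bt (ins_at f i t) = size_bt t + 2"
  by (induction t arbitrary: i) (auto simp: assms)

lemma ins_at_join:
  "mset (leaf_list (ins_at (\<lambda>v. if b then J (Lf u) v else J v (Lf u)) i t)) = mset (u # leaf_list t)
   \<and> size_bt (ins_at (\<lambda>v. if b then J (Lf u) v else J v (Lf u)) i t) = size_bt t + 2"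
  using ins_at_props[of "\<lambda>v. if b then J (Lf u) v else J v (Lf u)" u i t] by auto

lemma subst_leaf_set: "set (leaf_list (subst_leaf i u t)) \<subseteq> insert u (set (leaf_list t))"
  by (induction i u t rule: subst_leaf.induct) auto

lemma del_leaf_props:
  "set (leaves (del_leaf i t)) \<subseteq> set (leaf_list t) \<and> cplx (del_leaf i t) < size_bt t"
  by (induction i t rule: del_leaf.induct) (auto simp: leaves_def cplx_def split: option.splits)

lemma nleaves_ne [simp]: "{..<nleaves t} \<noteq> {}"
  using nleaves_pos[of t] by (simp add: lessThan_empty_iff)

lemma size_ne [simp]: "{..<size_bt t} \<noteq> {}"
  by (cases t) auto

lemma hvl_valid:
  assumes "n \<ge> 1" "valid n X"
  shows "set_pmf (hvl_prime n X) \<subseteq> {Y. valid n Y}"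
proof -
  have L: "set_pmf (pmf_of_set (lits n)) = lits n" using assms(1) by (simp add: lits_ne)
  have s: "set_pmf (substitute n X) \<subseteq> {Y. valid n Y}"
    using assms(2) subst_leaf_set
    by (fastforce simp: substitute_def L valid_def leaves_def split: option.splits)
  have i: "set_pmf (insert_op n X) \<subseteq> {Y. valid n Y}"
  proof (cases X)
    case None then show ?thesis by (auto simp: insert_op_def valid_def leaves_def L)
  next
    case (Some t)
    have "set (leaf_list (ins_at (\<lambda>v. if b then J (Lf u) v else J v (Lf u)) i t))
          = insert u (set (leaf_list t))" for b u i
      by (metis ins_at_join list.set(2) set_mset_mset)
    then show ?thesis using Some assms(2) by (auto simp: insert_op_def L valid_def leaves_def)
  qed
  have d: "set_pmf (delete_op X) \<subseteq> {Y. valid n Y}"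
    using assms del_leaf_props
    by (fastforce simp: delete_op_def valid_def leaves_def split: option.splits)
  show ?thesis using s i d by (auto simp: hvl_prime_def)
qed

lemma hvl_iter_valid:
  assumes "n \<ge> 1" "valid n X"
  shows "set_pmf (hvl_iter n k X) \<subseteq> {Y. valid n Y}"
  by (induction k) (use assms hvl_valid[OF assms(1)] in \<open>auto simp: hvl_iter_def\<close>)

lemma bind_ge:
  assumes "\<And>x. x \<in> A \<Longrightarrow> measure_pmf.prob (f x) B \<ge> c" "c \<ge> 0"
  shows "measure_pmf.prob (bind_pmf p f) B \<ge> c * measure_pmf.prob p A"
proof -
  have "ennreal (c * measure_pmf.prob p A) = (\<integral>\<^sup>+x. ennreal c * indicator A x \<partial>p)"
    using assms(2)
    by (simp add: nn_integral_cmult_indicator ennreal_mult measure_pmf.emeasure_eq_measure)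
  also have "\<dots> \<le> (\<integral>\<^sup>+x. emeasure (f x) B \<partial>p)"
  proof (rule nn_integral_mono)
    fix x show "ennreal c * indicator A x \<le> emeasure (measure_pmf (f x)) B"
      using assms by (cases "x \<in> A") (auto simp: measure_pmf.emeasure_eq_measure)
  qed
  also have "\<dots> = emeasure (bind_pmf p f) B"
    by (simp add: emeasure_bind_pmf)
  finally show ?thesis
    by (simp add: measure_pmf.emeasure_eq_measure)
qed

lemma bind_ge_all:
  assumes "\<And>x. measure_pmf.prob (f x) B \<ge> c" "c \<ge> 0"
  shows "measure_pmf.prob (bind_pmf p f) B \<ge> c"
  using bind_ge[where A=UNIV and f=f and B=B and c=c and p=p] assms by simp

text \<open>Each of the three operations is chosen with probability 1/3.\<close>
lemma hvl_prime_ge_op: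
  shows hvl_prime_ge_insert:
      "measure_pmf.prob (hvl_prime n X) G \<ge> measure_pmf.prob (insert_op n X) G / 3"
    and hvl_prime_ge_delete:
      "measure_pmf.prob (hvl_prime n X) G \<ge> measure_pmf.prob (delete_op X) G / 3"
proof -
  have op: "measure_pmf.prob (pmf_of_set {0::nat, 1, 2}) {op} = 1/3" if "op \<in> {0, 1, 2}" for op
    using that by (auto simp: measure_pmf_of_set)
  have "measure_pmf.prob (hvl_prime n X) G
        \<ge> measure_pmf.prob (insert_op n X) G * measure_pmf.prob (pmf_of_set {0::nat, 1, 2}) {1}"
    unfolding hvl_prime_def by (rule bind_ge) auto
  moreover have "measure_pmf.prob (pmf_of_set {0::nat, 1, 2}) {1} = 1/3" by (rule op) simp
  ultimately show "measure_pmf.prob (hvl_prime n X) G \<ge> measure_pmf.prob (insert_op n X) G / 3"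
    by (metis times_divide_eq_right mult.right_neutral)
  have "measure_pmf.prob (hvl_prime n X) G
        \<ge> measure_pmf.prob (delete_op X) G * measure_pmf.prob (pmf_of_set {0::nat, 1, 2}) {2}"
    unfolding hvl_prime_def by (rule bind_ge) auto
  moreover have "measure_pmf.prob (pmf_of_set {0::nat, 1, 2}) {2} = 1/3" by (rule op) simp
  ultimately show "measure_pmf.prob (hvl_prime n X) G \<ge> measure_pmf.prob (delete_op X) G / 3"
    by (metis times_divide_eq_right mult.right_neutral)
qed

lemma hvl_delete:
  assumes "\<And>i. del_leaf i t \<in> G"
  shows "measure_pmf.prob (hvl_prime n (Some t)) G \<ge> 1/3"
proof -
  have "measure_pmf.prob (delete_op (Some t)) G \<ge> 1"
    unfolding delete_op_def option.case by (rule bind_ge_all) (use assms in auto)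
  then show ?thesis using hvl_prime_ge_delete[where n=n and X="Some t" and G=G] by simp
qed

lemma prob_pos_lits:
  assumes "n \<ge> 1" "V \<subseteq> {1..n}"
  shows "measure_pmf.prob (pmf_of_set (lits n)) (Pos ` ({1..n} - V))
         = (real n - real (card V)) / (2 * real n)"
proof -
  have fin: "finite V" using assms(2) finite_subset by blast
  have "card (Pos ` ({1..n} - V)) = n - card V"
    using assms(2) fin by (simp add: card_image inj_on_def card_Diff_subset)
  moreover have "card V \<le> n" using card_mono[OF _ assms(2)] by simp
  moreover have "Pos ` ({1..n} - V) \<subseteq> lits n" by (auto simp: lits_def)
  ultimately show ?thesis using assms(1)
    by (simp add: measure_pmf_of_set lits_ne lits_card Int_absorb1 of_nat_diff)
qed

text \<open>From a tree with vector \<open>(k, 2k - 1)\<close>, \<open>k < n\<close>, one insertion of a missing positive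
  literal reaches \<open>(k + 1, 2k + 1)\<close>; this has probability \<open>\<ge> (n - k)/(6n)\<close>.\<close>
lemma hvl_grow:
  assumes n: "n \<ge> 1" and v: "valid n Z" and Z: "ORDER Z = k" "cplx Z = 2 * k - 1"
    and kn: "k < n"
  shows "measure_pmf.prob (hvl_prime n Z) {Y. ORDER Y = Suc k \<and> cplx Y = 2 * Suc k - 1}
         \<ge> (real n - real k) / (6 * real n)"
proof -
  let ?G = "{Y. ORDER Y = Suc k \<and> cplx Y = 2 * Suc k - 1}"
  have "measure_pmf.prob (insert_op n Z) ?G \<ge> (real n - real k) / (2 * real n)"
  proof (cases Z)
    case None
    then have k0: "k = 0" using Z by simp
    have good: "Some (Lf u) \<in> ?G" if "u \<in> Pos ` ({1..n} - {})" for u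
      using that k0 by (auto simp: ORDER_def leaves_def order_S_def order_step_def cplx_def)
    have "measure_pmf.prob (insert_op n None) ?G
          \<ge> 1 * measure_pmf.prob (pmf_of_set (lits n)) (Pos ` ({1..n} - {}))"
      unfolding insert_op_def option.case by (rule bind_ge) (use good in auto)
    then show ?thesis using None k0 prob_pos_lits[OF n, of "{}"] by simp
  next
    case (Some t)
    let ?l = "leaf_list t"
    let ?U = "Pos ` ({1..n} - var ` set ?l)"
    have l: "length ?l = k" "\<forall>x\<in>set ?l. isPos x" "distinct (map var ?l)"
      using optimal_tree_leaves[of t k] Z Some by auto
    have Vsub: "var ` set ?l \<subseteq> {1..n}" using v Some by (auto simp: valid_def leaves_def lits_def)
    have cV: "card (var ` set ?l) = k" using l by (metis distinct_card length_map set_map)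
    have good: "Some (ins_at (\<lambda>v. if b then J (Lf u) v else J v (Lf u)) i t) \<in> ?G"
      if u: "u \<in> ?U" for u i b
    proof -
      let ?t = "ins_at (\<lambda>v. if b then J (Lf u) v else J v (Lf u)) i t"
      have m: "mset (leaf_list ?t) = mset (u # ?l)" and sz: "size_bt ?t = size_bt t + 2"
        using ins_at_join by blast+
      have "set (leaf_list ?t) = set (u # ?l)" using m by (rule mset_eq_setD)
      then have pos: "\<forall>x\<in>set (leaf_list ?t). isPos x" using l(2) u by auto
      have "mset (map var (leaf_list ?t)) = mset (map var (u # ?l))" using m by (simp only: mset_map)
      moreover have "distinct (map var (u # ?l))" using l(3) u by auto
      ultimately have dis: "distinct (map var (leaf_list ?t))" by (rule mset_eq_imp_distinct_iff[THEN iffD2])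
      have "length (leaf_list ?t) = length (u # ?l)" using m by (rule mset_eq_length)
      then have len: "length (leaf_list ?t) = Suc k" using l(1) by simp
      have "ORDER (Some ?t) = Suc k"
        using order_S_pos[OF pos dis] pos len by (simp add: ORDER_isPos leaves_def)
      moreover have "cplx (Some ?t) = 2 * Suc k - 1"
        using len by (simp add: cplx_leaves leaves_def)
      ultimately show ?thesis by simp
    qed
    have "measure_pmf.prob (insert_op n (Some t)) ?G
          \<ge> measure_pmf.prob (pmf_of_set (lits n)) ?U"
      unfolding insert_op_def option.case
    proof (rule bind_ge_all)
      fix i
      have "measure_pmf.prob (pmf_of_set (lits n) \<bind> (\<lambda>u. bernoulli_pmf (1/2) \<bind>
              (\<lambda>b. return_pmf (Some (ins_at (\<lambda>v. if b then J (Lf u) v else J v (Lf u)) i t))))) ?G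
            \<ge> 1 * measure_pmf.prob (pmf_of_set (lits n)) ?U"
        by (rule bind_ge, rule bind_ge_all) (use good in auto)
      then show "measure_pmf.prob (pmf_of_set (lits n)) ?U \<le>
          measure_pmf.prob (pmf_of_set (lits n) \<bind> (\<lambda>u. bernoulli_pmf (1/2) \<bind>
              (\<lambda>b. return_pmf (Some (ins_at (\<lambda>v. if b then J (Lf u) v else J v (Lf u)) i t))))) ?G"
        by simp
    qed simp
    then show ?thesis using Some prob_pos_lits[OF n Vsub] cV by simp
  qed
  then show ?thesis using hvl_prime_ge_insert[where n=n and X=Z and G="?G"] by simp
qed

definition admissible_mutation :: "(nat \<Rightarrow> stree \<Rightarrow> stree pmf) \<Rightarrow> nat \<Rightarrow> bool" where
  "admissible_mutation mut n \<longleftrightarrow>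
     (\<forall>X. valid n X \<longrightarrow> set_pmf (mut n X) \<subseteq> {Y. valid n Y}) \<and>
     (\<forall>X G. measure_pmf.prob (mut n X) G \<ge> 1/3 * measure_pmf.prob (hvl_prime n X) G)"

lemma admissible_single: "n \<ge> 1 \<Longrightarrow> admissible_mutation mutate_single n"
  unfolding admissible_mutation_def mutate_single_def
  using hvl_valid measure_nonneg by auto

text \<open>Multi-operation mutation applies exactly one HVL-Prime step with probability
  \<open>Pr[Pois(1) = 0] = e\<^sup>-\<^sup>1 \<ge> 1/3\<close>.\<close>
lemma admissible_multi: "n \<ge> 1 \<Longrightarrow> admissible_mutation mutate_multi n"
  unfolding admissible_mutation_def
proof (intro conjI allI impI)
  fix X G
  let ?p = "measure_pmf.prob (hvl_prime n X) G"
  have "exp (-1::real) \<ge> 1/3"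
    using exp_le by (simp add: exp_minus field_simps)
  then have "1/3 * ?p \<le> exp (-1) * ?p"
    by (rule mult_right_mono) simp
  also have "\<dots> = ?p * measure_pmf.prob (poisson_pmf 1) {0}"
    by (simp add: measure_pmf_single)
  also have "\<dots> \<le> measure_pmf.prob (mutate_multi n X) G"
    unfolding mutate_multi_def by (rule bind_ge) (auto simp: hvl_iter_def bind_return_pmf)
  finally show "measure_pmf.prob (mutate_multi n X) G \<ge> 1/3 * ?p" .
next
  fix X assume "n \<ge> 1" "valid n X"
  then show "set_pmf (mutate_multi n X) \<subseteq> {Y. valid n Y}"
    using hvl_iter_valid by (fastforce simp: mutate_multi_def)
qed

definition upd :: "stree set \<Rightarrow> stree \<Rightarrow> stree set" where
  "upd P Y = (if \<exists>Z\<in>P. sdom Z Y then P else {Z \<in> P. \<not> wdom Y Z} \<union> {Y})"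

lemma smo_step_upd:
  "smo_step mut n P = pmf_of_set P \<bind> (\<lambda>X. mut n X \<bind> (\<lambda>Y. return_pmf (upd P Y)))"
  by (simp add: smo_step_def upd_def)

definition Inv :: "nat \<Rightarrow> stree set \<Rightarrow> bool" where
  "Inv n P \<longleftrightarrow> finite P \<and> P \<noteq> {} \<and> (\<forall>Z\<in>P. valid n Z) \<and>
     (\<forall>Z\<in>P. \<forall>Z'\<in>P. wdom Z Z' \<longrightarrow> Z = Z')"

lemma inv_upd:
  assumes "Inv n P" "valid n Y" shows "Inv n (upd P Y)"
proof (cases "\<exists>Z\<in>P. sdom Z Y")
  case True then show ?thesis using assms by (simp add: upd_def)
next
  case False
  have "wdom Z Y \<Longrightarrow> Z \<in> P \<Longrightarrow> \<not> wdom Y Z \<Longrightarrow> False" for Z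
    using False by (auto simp: sdom_def wdom_def)
  then show ?thesis using assms False unfolding Inv_def upd_def by (auto simp: wdom_def)
qed

lemma smo_step_support:
  assumes "Inv n P" "P' \<in> set_pmf (smo_step mut n P)"
  shows "\<exists>X\<in>P. \<exists>Y\<in>set_pmf (mut n X). P' = upd P Y"
  using assms by (auto simp: smo_step_upd Inv_def)

lemma smo_step_Inv:
  assumes "admissible_mutation mut n" "Inv n P"
  shows "set_pmf (smo_step mut n P) \<subseteq> {P. Inv n P}"
proof
  fix P' assume "P' \<in> set_pmf (smo_step mut n P)"
  then obtain X Y where X: "X \<in> P" "Y \<in> set_pmf (mut n X)" "P' = upd P Y"
    using smo_step_support[OF assms(2)] by blast
  have "valid n Y" using assms X(1,2) by (auto simp: Inv_def admissible_mutation_def)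
  then show "P' \<in> {P. Inv n P}" using inv_upd[OF assms(2)] X(3) by simp
qed

text \<open>In an antichain no two trees share the ORDER value, so it has at most \<open>n + 1\<close> members.\<close>
lemma inv_card:
  assumes "Inv n P" shows "card P \<le> n + 1"
proof -
  have H: "\<forall>Z\<in>P. \<forall>Z'\<in>P. wdom Z Z' \<longrightarrow> Z = Z'" using assms by (simp add: Inv_def)
  have inj: "inj_on ORDER P"
  proof (rule inj_onI)
    fix Z Z' assume Z: "Z \<in> P" "Z' \<in> P" "ORDER Z = ORDER Z'"
    then have "wdom Z Z' \<or> wdom Z' Z" by (auto simp: wdom_def)
    then show "Z = Z'" using H Z by blast
  qed
  have "ORDER ` P \<subseteq> {0..n}" using assms ORDER_le_n by (auto simp: Inv_def)
  then have "card (ORDER ` P) \<le> n + 1" using card_mono[of "{0..n}"] by fastforce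
  with inj show ?thesis by (simp add: card_image)
qed

lemma smo_progress:
  assumes adm: "admissible_mutation mut n" and inv: "Inv n P" and Z: "Z \<in> P"
    and prog: "\<And>Y. Y \<in> G \<Longrightarrow> upd P Y \<in> Prog"
  shows "measure_pmf.prob (smo_step mut n P) Prog
         \<ge> measure_pmf.prob (hvl_prime n Z) G / (3 * (real n + 1))"
proof -
  have fin: "finite P" "P \<noteq> {}" using inv by (auto simp: Inv_def)
  have inner: "measure_pmf.prob (mut n Z \<bind> (\<lambda>Y. return_pmf (upd P Y))) Prog
               \<ge> measure_pmf.prob (mut n Z) G"
    using bind_ge[where A=G and f="\<lambda>Y. return_pmf (upd P Y)" and B=Prog and c=1 and p="mut n Z"] prog
    by simp
  have "measure_pmf.prob (hvl_prime n Z) G / (3 * (real n + 1))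
        = measure_pmf.prob (hvl_prime n Z) G / 3 * (1 / (real n + 1))"
    by simp
  also have "\<dots> \<le> measure_pmf.prob (mut n Z) G * (1 / real (card P))"
  proof (rule mult_mono)
    show "measure_pmf.prob (hvl_prime n Z) G / 3 \<le> measure_pmf.prob (mut n Z) G"
      using adm by (simp add: admissible_mutation_def)
    show "1 / (real n + 1) \<le> 1 / real (card P)"
      using inv_card[OF inv] fin by (simp add: frac_le card_gt_0_iff)
  qed simp_all
  also have "\<dots> = measure_pmf.prob (mut n Z) G * measure_pmf.prob (pmf_of_set P) {Z}"
    using fin Z by (simp add: measure_pmf_of_set)
  also have "\<dots> \<le> measure_pmf.prob (smo_step mut n P) Prog"
    unfolding smo_step_upd by (rule bind_ge) (use inner in auto)
  finally show ?thesis .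
qed

text \<open>\<open>has P j\<close>: the population contains the Pareto vector \<open>(j, 2j - 1)\<close>.  Once present,
  it stays (anything weakly dominating it has the same vector).\<close>
definition has :: "stree set \<Rightarrow> nat \<Rightarrow> bool" where
  "has P j \<longleftrightarrow> (\<exists>Z\<in>P. ORDER Z = j \<and> cplx Z = 2 * j - 1)"

lemma has_upd: "has P j \<Longrightarrow> has (upd P Y) j"
  unfolding has_def upd_def using wdom_optimal_vector by fastforce

lemma has_new: "ORDER Y = j \<Longrightarrow> cplx Y = 2 * j - 1 \<Longrightarrow> has (upd P Y) j"
  using wdom_optimal_vector[of _ Y j] by (auto simp: has_def upd_def sdom_def)

lemma has0: "has P 0 \<longleftrightarrow> None \<in> P"
proof
  assume "has P 0"
  then obtain Z where "Z \<in> P" "cplx Z = 0" by (auto simp: has_def)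
  then show "None \<in> P" using cplx0 by blast
qed (force simp: has_def)

lemma covers: "(\<forall>j\<le>n. has P j) \<Longrightarrow> covers_front n P"
  unfolding covers_front_def pareto_front_def has_def
  using pareto_char by fastforce

definition level :: "nat \<Rightarrow> stree set \<Rightarrow> nat" where
  "level n P = Max {k. k \<le> n \<and> (\<forall>j\<le>k. has P j)}"

text \<open>The level is well defined once the empty tree is present.\<close>
lemma level_props:
  assumes "has P 0"
  shows "level n P \<le> n \<and> (\<forall>j\<le>level n P. has P j)"
proof -
  have "0 \<in> {k. k \<le> n \<and> (\<forall>j\<le>k. has P j)}" using assms by simp
  then have "level n P \<in> {k. k \<le> n \<and> (\<forall>j\<le>k. has P j)}"
    unfolding level_def by (intro Max_in) auto
  then show ?thesis by simp
qed

lemma level_ge: "k \<le> n \<Longrightarrow> (\<forall>j\<le>k. has P j) \<Longrightarrow> k \<le> level n P"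
  unfolding level_def by (rule Max_ge) auto

definition min_cplx :: "stree set \<Rightarrow> nat" where
  "min_cplx P = Min (cplx ` P)"

lemma min_cplx_upd:
  assumes "finite P" "P \<noteq> {}" shows "min_cplx (upd P Y) \<le> min_cplx P"
proof -
  have "min_cplx P \<in> cplx ` P" using assms unfolding min_cplx_def by (intro Min_in) auto
  then obtain Z where Z: "Z \<in> P" "cplx Z = min_cplx P" by auto
  have fin: "finite (upd P Y)" using assms by (auto simp: upd_def)
  obtain W where W: "W \<in> upd P Y" "cplx W \<le> cplx Z"
    using Z(1) by (cases "Z \<in> upd P Y") (auto simp: upd_def wdom_def split: if_splits)
  have "min_cplx (upd P Y) \<le> cplx W" unfolding min_cplx_def using fin W(1) by simp
  with W Z show ?thesis by simp
qed

lemma min_cplx_new: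
  assumes "finite P" "P \<noteq> {}" "cplx Y < min_cplx P"
  shows "min_cplx (upd P Y) < min_cplx P"
proof -
  have "\<not> sdom Z Y" if "Z \<in> P" for Z
    using assms that Min_le[of "cplx ` P" "cplx Z"] by (auto simp: sdom_def wdom_def min_cplx_def)
  then have "Y \<in> upd P Y" "finite (upd P Y)" using assms by (auto simp: upd_def)
  then have "min_cplx (upd P Y) \<le> cplx Y" by (simp add: min_cplx_def)
  with assms show ?thesis by simp
qed

section \<open>Additive drift\<close>

lemma drift:
  fixes K :: "'a \<Rightarrow> 'a pmf" and V :: "'a \<Rightarrow> ennreal"
  assumes s0: "s0 \<in> S" and cl: "\<And>s. s \<in> S \<Longrightarrow> set_pmf (K s) \<subseteq> S"
    and dr: "\<And>s. s \<in> S \<Longrightarrow> (\<integral>\<^sup>+x. V x \<partial>K s) + indicator Bad s \<le> V s"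
  shows "(\<Sum>t. emeasure (((\<lambda>D. bind_pmf D K) ^^ t) (return_pmf s0)) Bad) \<le> V s0"
proof -
  define D where "D t = ((\<lambda>D. bind_pmf D K) ^^ t) (return_pmf s0)" for t
  have DS: "D (Suc t) = bind_pmf (D t) K" for t by (simp add: D_def)
  have I: "set_pmf (D N) \<subseteq> S \<and> (\<integral>\<^sup>+x. V x \<partial>D N) + (\<Sum>t<N. emeasure (D t) Bad) \<le> V s0" for N
  proof (induction N)
    case 0 then show ?case using s0 by (simp add: D_def)
  next
    case (Suc N)
    then have sub: "set_pmf (D N) \<subseteq> S"
      and ih: "(\<integral>\<^sup>+x. V x \<partial>D N) + (\<Sum>t<N. emeasure (D t) Bad) \<le> V s0"
      by auto
    have "(\<integral>\<^sup>+x. V x \<partial>D (Suc N)) + emeasure (D N) Bad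
        = (\<integral>\<^sup>+s. (\<integral>\<^sup>+x. V x \<partial>K s) + indicator Bad s \<partial>D N)"
      by (simp add: DS nn_integral_add)
    also have "\<dots> \<le> (\<integral>\<^sup>+s. V s \<partial>D N)"
      by (rule nn_integral_mono_AE) (use sub dr in \<open>auto simp: AE_measure_pmf_iff\<close>)
    finally have "(\<integral>\<^sup>+x. V x \<partial>D (Suc N)) + (\<Sum>t<Suc N. emeasure (D t) Bad)
                  \<le> (\<integral>\<^sup>+s. V s \<partial>D N) + (\<Sum>t<N. emeasure (D t) Bad)"
      by (simp add: add_ac add_right_mono)
    then have "(\<integral>\<^sup>+x. V x \<partial>D (Suc N)) + (\<Sum>t<Suc N. emeasure (D t) Bad) \<le> V s0"
      using ih by (rule order_trans)
    then show ?case using sub cl by (auto simp: DS)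
  qed
  have "(\<Sum>t<N. emeasure (D t) Bad) \<le> V s0" for N
    by (rule order_trans[OF add_increasing[OF zero_le order_refl] conjunct2[OF I[of N]]])
  then show ?thesis by (simp add: D_def suminf_eq_SUP SUP_least)
qed

lemma step_drift:
  fixes f :: "'a \<Rightarrow> real"
  assumes "\<And>x. x \<in> set_pmf M \<Longrightarrow> f x + d * indicator A x \<le> c"
    and "\<And>x. f x \<ge> 0" "d \<ge> 0" "d * measure_pmf.prob M A \<ge> 1"
  shows "(\<integral>\<^sup>+x. ennreal (f x) \<partial>M) + 1 \<le> ennreal c"
proof -
  have "(\<integral>\<^sup>+x. ennreal (f x) \<partial>M) + 1 \<le> (\<integral>\<^sup>+x. ennreal (f x) \<partial>M) + ennreal d * emeasure M A"
  proof (rule add_left_mono)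
    have "ennreal d * emeasure M A = ennreal (d * measure_pmf.prob M A)"
      using assms(3) by (simp add: measure_pmf.emeasure_eq_measure ennreal_mult)
    then show "1 \<le> ennreal d * emeasure M A" using assms(4) by simp
  qed
  also have "\<dots> = (\<integral>\<^sup>+x. ennreal (f x) \<partial>M) + (\<integral>\<^sup>+x. ennreal d * indicator A x \<partial>M)"
    by (simp add: nn_integral_cmult_indicator)
  also have "\<dots> = (\<integral>\<^sup>+x. ennreal (f x) + ennreal d * indicator A x \<partial>M)"
    by (rule nn_integral_add[symmetric]) auto
  also have "\<dots> \<le> (\<integral>\<^sup>+x. ennreal c \<partial>M)"
  proof (rule nn_integral_mono_AE)
    show "AE x in measure_pmf M. ennreal (f x) + ennreal d * indicator A x \<le> ennreal c"
      unfolding AE_measure_pmf_iff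
    proof
      fix x assume x: "x \<in> set_pmf M"
      have "ennreal (f x) + ennreal d * indicator A x = ennreal (f x + d * indicator A x)"
        using assms(2,3) by (simp add: ennreal_plus ennreal_mult indicator_def)
      also have "\<dots> \<le> ennreal c" using assms(1)[OF x] by (rule ennreal_leI)
      finally show "ennreal (f x) + ennreal d * indicator A x \<le> ennreal c" .
    qed
  qed
  also have "\<dots> = ennreal c" by simp
  finally show ?thesis .
qed

section \<open>The potential\<close>

text \<open>Weight of level \<open>j\<close>: the reciprocal of the lower bound on the probability to leave it.\<close>
definition level_weight :: "nat \<Rightarrow> nat \<Rightarrow> real" where
  "level_weight n j = 18 * real n * (real n + 1) / (real n - real j)"

text \<open>Expected remaining time of phase 2 from level \<open>k\<close>.\<close>
definition level_tail :: "nat \<Rightarrow> nat \<Rightarrow> real" where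
  "level_tail n k = (\<Sum>j\<in>{k..<n}. level_weight n j)"

text \<open>Phase 1 (empty tree missing): driven by the minimal complexity; phase 2: by the level.\<close>
definition potential :: "nat \<Rightarrow> stree set \<Rightarrow> real" where
  "potential n P = (if has P 0 then level_tail n (level n P)
                    else level_tail n 0 + 9 * (real n + 1) * real (min_cplx P))"

lemma level_weight_nonneg: "j < n \<Longrightarrow> level_weight n j \<ge> 0"
  by (simp add: level_weight_def)

lemma level_tail_mono: "k \<le> k' \<Longrightarrow> level_tail n k' \<le> level_tail n k"
  unfolding level_tail_def by (rule sum_mono2) (auto simp: level_weight_nonneg)

lemma level_tail_nonneg: "level_tail n k \<ge> 0"
  unfolding level_tail_def by (rule sum_nonneg) (simp add: level_weight_nonneg)

lemma level_tail_step: "k < n \<Longrightarrow> level_tail n k = level_weight n k + level_tail n (Suc k)"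
  unfolding level_tail_def by (rule sum.atLeast_Suc_lessThan)

lemma potential_nonneg: "potential n P \<ge> 0"
  by (simp add: potential_def level_tail_nonneg)

text \<open>Phase 2: raising the level from \<open>k\<close> has probability \<open>\<ge> 1 / level_weight n k\<close>.\<close>
lemma drift_phase2:
  assumes n: "n \<ge> 1" and adm: "admissible_mutation mut n" and inv: "Inv n P"
    and nc: "\<not> covers_front n P" and h0: "has P 0"
  shows "(\<integral>\<^sup>+x. ennreal (potential n x) \<partial>smo_step mut n P) + 1 \<le> ennreal (potential n P)"
proof -
  define k where "k = level n P"
  have lp: "k \<le> n" "\<forall>j\<le>k. has P j" using level_props[OF h0] by (auto simp: k_def)
  have kn: "k < n" using lp nc covers[of n P] by (metis le_neq_implies_less)
  have gP: "potential n P = level_tail n k" using h0 by (simp add: potential_def k_def)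
  show ?thesis
  proof (rule step_drift[where A="{P'. has P' (Suc k)}" and d="level_weight n k"])
    fix P' assume "P' \<in> set_pmf (smo_step mut n P)"
    then obtain Y where P': "P' = upd P Y" using smo_step_support[OF inv] by blast
    have hj: "\<forall>j\<le>k. has P' j" using lp has_upd P' by blast
    have kl: "k \<le> level n P'" by (rule level_ge[OF lp(1) hj])
    show "potential n P' + level_weight n k * indicator {P'. has P' (Suc k)} P' \<le> potential n P"
    proof (cases "has P' (Suc k)")
      case True
      then have "\<forall>j\<le>Suc k. has P' j" using hj le_Suc_eq by blast
      then have "level_tail n (level n P') \<le> level_tail n (Suc k)"
        using kn by (intro level_tail_mono level_ge) auto
      then show ?thesis using True hj gP level_tail_step[OF kn] by (simp add: potential_def)
    qed (use hj gP level_tail_mono[OF kl] in \<open>simp add: potential_def\<close>)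
  next
    obtain Z where Z: "Z \<in> P" "ORDER Z = k" "cplx Z = 2 * k - 1"
      using lp(2) by (auto simp: has_def)
    have vZ: "valid n Z" using inv Z(1) by (simp add: Inv_def)
    let ?G = "{Y. ORDER Y = Suc k \<and> cplx Y = 2 * Suc k - 1}"
    have "(real n - real k) / (6 * real n) / (3 * (real n + 1))
          \<le> measure_pmf.prob (hvl_prime n Z) ?G / (3 * (real n + 1))"
      by (rule divide_right_mono[OF hvl_grow[OF n vZ Z(2,3) kn]]) simp
    also have "\<dots> \<le> measure_pmf.prob (smo_step mut n P) {P'. has P' (Suc k)}"
      by (rule smo_progress[OF adm inv Z(1)]) (simp add: has_new)
    finally have "measure_pmf.prob (smo_step mut n P) {P'. has P' (Suc k)}
                  \<ge> (real n - real k) / (6 * real n) / (3 * (real n + 1))" .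
    moreover have "level_weight n k * ((real n - real k) / (6 * real n) / (3 * (real n + 1))) = 1"
    proof -
      have "real n - real k > 0" "real n > 0" using kn by auto
      then show ?thesis by (simp add: level_weight_def)
    qed
    ultimately show "1 \<le> level_weight n k * measure_pmf.prob (smo_step mut n P) {P'. has P' (Suc k)}"
      by (metis level_weight_nonneg[OF kn] mult_left_mono)
  qed (use potential_nonneg level_weight_nonneg[OF kn] in auto)
qed

text \<open>Phase 1: deleting a leaf of a smallest tree lowers the minimal complexity (or creates
  the empty tree) with probability \<open>\<ge> 1/(9(n+1))\<close>.\<close>
lemma drift_phase1:
  assumes adm: "admissible_mutation mut n" and inv: "Inv n P" and h0: "\<not> has P 0"
  shows "(\<integral>\<^sup>+x. ennreal (potential n x) \<partial>smo_step mut n P) + 1 \<le> ennreal (potential n P)"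
proof -
  have fin: "finite P" "P \<noteq> {}" using inv by (auto simp: Inv_def)
  define m where "m = min_cplx P"
  have gP: "potential n P = level_tail n 0 + 9 * (real n + 1) * real m"
    using h0 by (simp add: potential_def m_def)
  have "m \<in> cplx ` P" using fin unfolding m_def min_cplx_def by (intro Min_in) auto
  then obtain Z where Z: "Z \<in> P" "cplx Z = m" by auto
  obtain t where t: "Z = Some t" using Z(1) h0 has0 by (cases Z) auto
  have m1: "m \<ge> 1" using Z t nleaves_pos[of t] by (simp add: cplx_def size_bt_eq)
  show ?thesis
  proof (rule step_drift[where A="{P'. has P' 0 \<or> min_cplx P' < m}" and d="9 * (real n + 1)"])
    fix P' assume "P' \<in> set_pmf (smo_step mut n P)"
    then obtain Y where P': "P' = upd P Y" using smo_step_support[OF inv] by blast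
    have mle: "min_cplx P' \<le> m" using min_cplx_upd[OF fin] P' by (simp add: m_def)
    show "potential n P' + 9 * (real n + 1) * indicator {P'. has P' 0 \<or> min_cplx P' < m} P'
          \<le> potential n P"
    proof (cases "has P' 0")
      case True
      have "potential n P' + 9 * (real n + 1) * indicator {P'. has P' 0 \<or> min_cplx P' < m} P'
            = level_tail n (level n P') + 9 * (real n + 1)"
        using True by (simp add: potential_def)
      moreover have "level_tail n (level n P') \<le> level_tail n 0" by (rule level_tail_mono) simp
      moreover have "9 * (real n + 1) \<le> 9 * (real n + 1) * real m" using m1 by simp
      ultimately show ?thesis using gP by linarith
    next
      case no_empty: False
      show ?thesis
      proof (cases "min_cplx P' < m")
        case True
        then have "9 * (real n + 1) * (real (min_cplx P') + 1) \<le> 9 * (real n + 1) * real m"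
          by (intro mult_left_mono) auto
        then show ?thesis using True no_empty gP by (simp add: potential_def algebra_simps)
      qed (use no_empty gP mle in \<open>simp add: potential_def\<close>)
    qed
  next
    have "del_leaf i t \<in> {Y. cplx Y < m}" for i
      using del_leaf_props[of i t] Z(2) t by (simp add: cplx_def)
    then have "(1/3) / (3 * (real n + 1))
               \<le> measure_pmf.prob (hvl_prime n Z) {Y. cplx Y < m} / (3 * (real n + 1))"
      unfolding t by (intro divide_right_mono hvl_delete) auto
    also have "\<dots> \<le> measure_pmf.prob (smo_step mut n P) {P'. has P' 0 \<or> min_cplx P' < m}"
      by (rule smo_progress[OF adm inv Z(1)]) (use min_cplx_new[OF fin] in \<open>simp add: m_def\<close>)
    finally have "measure_pmf.prob (smo_step mut n P) {P'. has P' 0 \<or> min_cplx P' < m}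
                  \<ge> (1/3) / (3 * (real n + 1))" .
    then show "1 \<le> 9 * (real n + 1) * measure_pmf.prob (smo_step mut n P) {P'. has P' 0 \<or> min_cplx P' < m}"
      by (simp add: field_simps)
  qed (use potential_nonneg in auto)
qed

lemma potential_initial:
  "potential n {X0} \<le> level_tail n 0 + 9 * (real n + 1) * real (cplx X0)"
proof (cases "has {X0} 0")
  case True
  have "potential n {X0} \<le> level_tail n 0"
    using True level_tail_mono[of 0 "level n {X0}" n] by (simp add: potential_def)
  then show ?thesis by (rule add_increasing2[rotated]) simp
qed (simp add: potential_def min_cplx_def)

text \<open>Drift applied to the stopped chain: states are \<open>None\<close> (already done) or
  invariant populations, the potential is 0 on \<open>None\<close>, and the bad states are the
  populations not yet covering the front.\<close>
lemma expected_time_bound: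
  assumes n: "n \<ge> 1" and v0: "valid n X0" and adm: "admissible_mutation mut n"
  shows "expected_opt_time mut n X0 \<le> ennreal (level_tail n 0 + 9 * (real n + 1) * real (cplx X0))"
proof -
  define V where "V s = (case s of None \<Rightarrow> 0 | Some P \<Rightarrow> ennreal (potential n P))" for s
  define S where "S = insert None (Some ` {P. Inv n P})"
  define Bad where "Bad = {Some P | P. \<not> covers_front n P}"
  have cl: "set_pmf (stopped_step mut n s) \<subseteq> S" if "s \<in> S" for s
  proof (cases s)
    case (Some P)
    then have "set_pmf (smo_step mut n P) \<subseteq> {P. Inv n P}"
      using that smo_step_Inv[OF adm] by (auto simp: S_def)
    then show ?thesis using Some by (auto simp: stopped_step_def S_def)
  qed (simp add: stopped_step_def S_def)
  have dr: "(\<integral>\<^sup>+x. V x \<partial>stopped_step mut n s) + indicator Bad s \<le> V s" if s: "s \<in> S" for s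
  proof (cases "\<exists>P. s = Some P \<and> \<not> covers_front n P")
    case True
    then obtain P where P: "s = Some P" "\<not> covers_front n P" "Inv n P" using s by (auto simp: S_def)
    then show ?thesis using drift_phase1[OF adm P(3)] drift_phase2[OF n adm P(3,2)]
      by (cases "has P 0") (auto simp: stopped_step_def V_def Bad_def)
  qed (auto simp: stopped_step_def V_def Bad_def split: option.splits)
  have "expected_opt_time mut n X0
        = (\<Sum>t. emeasure (((\<lambda>D. bind_pmf D (stopped_step mut n)) ^^ t) (return_pmf (Some {X0}))) Bad)"
    unfolding expected_opt_time_def prob_not_done_def stopped_dist_def Bad_def
    by (simp add: measure_pmf.emeasure_eq_measure)
  also have "\<dots> \<le> V (Some {X0})"
    by (rule drift[OF _ cl dr]) (use v0 in \<open>simp add: S_def Inv_def\<close>)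
  also have "\<dots> \<le> ennreal (level_tail n 0 + 9 * (real n + 1) * real (cplx X0))"
    unfolding V_def option.case by (rule ennreal_leI[OF potential_initial])
  finally show ?thesis .
qed

lemma level_tail0: "level_tail n 0 = 18 * real n * (real n + 1) * harm n"
proof -
  have "(\<Sum>j\<in>{0..<n}. 1 / (real n - real j)) = (\<Sum>i\<in>{0..<n}. 1 / (real n - real (n + 0 - Suc i)))"
    by (rule sum.atLeastLessThan_rev)
  also have "\<dots> = harm n"
    unfolding harm_altdef by (rule sum.cong) (auto simp: of_nat_diff field_simps)
  finally have "(\<Sum>j\<in>{0..<n}. 1 / (real n - real j)) = harm n" .
  then show ?thesis
    unfolding level_tail_def level_weight_def by (simp add: sum_distrib_left[symmetric] divide_inverse)
qed

text \<open>\<open>H\<^sub>n \<le> 1 + ln n\<close>, since \<open>H\<^sub>n - ln n\<close> is decreasing.\<close>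
lemma harm_le: "n \<ge> 1 \<Longrightarrow> harm n \<le> 1 + ln (real n)"
proof -
  assume "n \<ge> 1"
  then obtain m where m: "n = Suc m" by (cases n) auto
  have "harm (Suc m) - ln (real (Suc m)) \<le> harm (Suc 0) - ln (real (Suc 0))"
    using decseq_harm_diff_ln unfolding decseq_def by blast
  then show ?thesis using m by (simp add: harm_altdef)
qed

text \<open>For \<open>n \<ge> 3\<close> (so \<open>ln n \<ge> 1\<close>) the potential bound is at most \<open>72 (n T + n\<^sup>2 ln n)\<close>.\<close>
lemma final_arith:
  assumes "n \<ge> 3"
  shows "level_tail n 0 + 9 * (real n + 1) * real T \<le> 72 * (real n * real T + (real n)^2 * ln (real n))"
proof -
  have np: "real n \<ge> 3" using assms by simp
  have "exp 1 \<le> real n" using exp_le np by linarith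
  then have "ln (real n) \<ge> 1" using ln_ge_iff[of "real n" 1] np by simp
  then have h: "harm n \<le> 2 * ln (real n)" using harm_le[of n] assms by simp
  have "level_tail n 0 = 18 * real n * (real n + 1) * harm n" by (rule level_tail0)
  also have "\<dots> \<le> 18 * real n * (2 * real n) * (2 * ln (real n))"
    by (rule mult_mono) (use h np harm_nonneg[where n=n] in auto)
  finally have a: "level_tail n 0 \<le> 72 * (real n)^2 * ln (real n)" by (simp add: power2_eq_square)
  have b: "9 * (real n + 1) * real T \<le> 72 * real n * real T"
    by (rule mult_right_mono) (use np in auto)
  show ?thesis using a b by (simp add: algebra_simps)
qed

lemma runtime_bound:
  assumes "n \<ge> 3" "valid n X0" "admissible_mutation mut n"
  shows "expected_opt_time mut n X0
         \<le> ennreal (72 * (real n * real (cplx X0) + (real n)^2 * ln (real n)))"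
proof -
  have "n \<ge> 1" using assms(1) by simp
  from expected_time_bound[OF this assms(2,3)] ennreal_leI[OF final_arith[OF assms(1)]]
  show ?thesis by (rule order_trans)
qed

theorem theorem4:
  shows "\<exists>c > 0. \<exists>n0. \<forall>n \<ge> n0. \<forall>X0. valid n X0 \<longrightarrow>
    expected_opt_time mutate_single n X0
      \<le> ennreal (c * (real n * real (cplx X0) + (real n)^2 * ln (real n))) \<and>
    expected_opt_time mutate_multi n X0
      \<le> ennreal (c * (real n * real (cplx X0) + (real n)^2 * ln (real n)))"
proof -
  have "\<forall>n \<ge> 3. \<forall>X0. valid n X0 \<longrightarrow>
    expected_opt_time mutate_single n X0
      \<le> ennreal (72 * (real n * real (cplx X0) + (real n)^2 * ln (real n))) \<and>
    expected_opt_time mutate_multi n X0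
      \<le> ennreal (72 * (real n * real (cplx X0) + (real n)^2 * ln (real n)))"
    using runtime_bound admissible_single admissible_multi by simp
  then show ?thesis by (intro exI[of _ 72] conjI exI[of _ 3]) auto
qed

end
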